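(* Let $\mathbf{P}=(\mathbf{P}^{(0)},\mathbf{P}^{(1)},\ldots,\mathbf{P}^{(K_1)})$ be a $(K_1,K_2;F;Z_1,Z_2;\mathcal{S}_\mathrm{m},\mathcal{S}_1,\ldots,\mathcal{S}_{K_1})$ HPDA. Then for every $N\ge K_1K_2$ there exists an $F$-division coded caching scheme with uncoded placement for the $(K_1,K_2;M_1,M_2;N)$ hierarchical caching system with $$\frac{M_1}{N}=\frac{Z_1}{F},\qquad \frac{M_2}{N}=\frac{Z_2}{F},$$ and transmission loads $$R_1=\frac{\left|\bigcup_{k_1=1}^{K_1}\mathcal{S}_{k_1}\right|-|\mathcal{S}_\mathrm{m}|}{F},\qquad R_2=\max_{k_1\in[K_1]}\frac{|\mathcal{S}_{k_1}|}{F}.$$ In this scheme mirror site $k_1$ caches packet $W_{n,j}$ of every file iff $p^{(0)}_{j,k_1}=*$, and user $U_{k_1,k_2}$ caches $W_{n,j}$ of every file iff $p^{(k_1)}_{j,k_2}=*$.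
   Context: Notation: $[a]=\{1,\ldots,a\}$, $[a:b]=\{a,\ldots,b\}$. PDA. For positive integers $K,F,Z,S$ and an integer set $\mathcal{S}$ with $|\mathcal{S}|=S$, an $F\times K$ array $\mathbf{Q}=(q_{j,k})$ with entries in $\{*\}\cup\mathcal{S}$ is a $(K,F,Z,S)$ placement delivery array (PDA) (over $\mathcal{S}$; by default $\mathcal{S}=[S]$) if: (C1) the symbol $*$ appears exactly $Z$ times in each column; (C2) each integer of $\mathcal{S}$ occurs at least once in the array; (C3) for two distinct entries $q_{j_1,k_1}=q_{j_2,k_2}=s$ with $s$ an integer, we have $j_1\ne j_2$, $k_1\ne k_2$, and $q_{j_1,k_2}=q_{j_2,k_1}=*$. HPDA. Let $K_1,K_2,F,Z_1,Z_2$ be positive integers with $Z_1<F$, $Z_2<F$, and let $\mathcal{S}_\mathrm{m},\mathcal{S}_1,\ldots,\mathcal{S}_{K_1}$ be sets of integers. An $F\times(K_1+K_1K_2)$ array $\mathbf{P}=(\mathbf{P}^{(0)},\mathbf{P}^{(1)},\ldots,\mathbf{P}^{(K_1)})$, where $\mathbf{P}^{(0)}=(p^{(0)}_{j,k_1})_{j\in[F],k_1\in[K_1]}$ has every entry equal to $*$ or to "null" (blank), and for each $k_1\in[K_1]$, $\mathbf{P}^{(k_1)}=(p^{(k_1)}_{j,k_2})_{j\in[F],k_2\in[K_2]}$ has entries in $\{*\}\cup\mathcal{S}_{k_1}$, is a $(K_1,K_2;F;Z_1,Z_2;\mathcal{S}_\mathrm{m},\mathcal{S}_1,\ldots,\mathcal{S}_{K_1})$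 hierarchical placement delivery array (HPDA) if: (B1) each column of $\mathbf{P}^{(0)}$ contains exactly $Z_1$ stars; (B2) for each $k_1\in[K_1]$, $\mathbf{P}^{(k_1)}$ is a $(K_2,F,Z_2,|\mathcal{S}_{k_1}|)$ PDA over $\mathcal{S}_{k_1}$; (B3) each integer $s\in\mathcal{S}_\mathrm{m}$ occurs in exactly one of the subarrays $\mathbf{P}^{(1)},\ldots,\mathbf{P}^{(K_1)}$, and whenever $p^{(k_1)}_{j,k_2}=s\in\mathcal{S}_\mathrm{m}$ we have $p^{(0)}_{j,k_1}=*$; (B4) for any $k_1\ne k_1'\in[K_1]$, $j,j'\in[F]$, $k_2,k_2'\in[K_2]$ with $p^{(k_1)}_{j,k_2}=p^{(k_1')}_{j',k_2'}$ an integer: if $p^{(k_1)}_{j',k_2}$ is an integer then $p^{(0)}_{j',k_1}=*$; and if $p^{(k_1')}_{j,k_2'}$ is an integer then $p^{(0)}_{j,k_1'}=*$. Hierarchical caching model $(K_1,K_2;M_1,M_2;N)$. A server stores $N$ independent files $W_1,\ldots,W_N$, each uniformly distributed on $B$ bits. There are $K_1$ mirror sites, each with a cache of $M_1B$ bits, and $K_1K_2$ users $U_{k_1,k_2}$ ($k_1\in[K_1]$, $k_2\in[K_2]$), each with a cache of $M_2B$ bits; user $U_{k_1,k_2}$ is attached to mirror site $k_1$. The server reaches all mirror sites through one error-free broadcast link; mirror site $k_1$ reaches its $K_2$ attached users through an error-free broadcast link. An $F$-division scheme with uncoded placement ($F\mid B$): each file $W_n$ is split into $F$ packets $W_{n,1},\ldots,W_{n,F}$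 of $B/F$ bits. In the placement phase (without knowledge of demands) mirror site $k_1$ stores a set $\mathcal{Z}_{k_1}$ of packets of total size at most $M_1B$ bits and user $U_{k_1,k_2}$ stores a set $\mathcal{Z}_{(k_1,k_2)}$ of packets of total size at most $M_2B$ bits. In the delivery phase, given a demand vector $\mathbf{d}=(d_{k_1,k_2})\in[N]^{K_1K_2}$, the server broadcasts to the mirror sites a message $X$ consisting of $S(\mathbf{d})$ packet-sized symbols, a function of the files and $\mathbf{d}$; each mirror site $k_1$ broadcasts to its attached users a message $X_{k_1}$ of $S_{k_1}(\mathbf{d})$ packet-sized symbols, a function of $X$, $\mathcal{Z}_{k_1}$ and $\mathbf{d}$; each user $U_{k_1,k_2}$ must recover $W_{d_{k_1,k_2}}$ from $X_{k_1}$, $\mathcal{Z}_{(k_1,k_2)}$ and $\mathbf{d}$. The loads are $R_1=\max_{\mathbf{d}}S(\mathbf{d})/F$ and $R_2=\max_{k_1,\mathbf{d}}S_{k_1}(\mathbf{d})/F$. *)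

theory Defs
  imports Complex_Main
begin

text \<open>An entry of a (sub)array P^(k1) or a PDA: either the star symbol or an integer.
  Arrays are functions row j (in [F]) => column k => entry, indices 1-based.\<close>
datatype cell = Star | Val int

definition is_PDA_over :: "nat \<Rightarrow> nat \<Rightarrow> nat \<Rightarrow> int set \<Rightarrow> (nat \<Rightarrow> nat \<Rightarrow> cell) \<Rightarrow> bool" where
  "is_PDA_over K F Z S Q \<longleftrightarrow>
     K > 0 \<and> F > 0 \<and> Z > 0 \<and> finite S \<and> card S > 0 \<and>
     (\<forall>j\<in>{1..F}. \<forall>k\<in>{1..K}. Q j k = Star \<or> (\<exists>s\<in>S. Q j k = Val s)) \<and>
     (\<forall>k\<in>{1..K}. card {j\<in>{1..F}. Q j k = Star} = Z) \<and>
     (\<forall>s\<in>S. \<exists>j\<in>{1..F}. \<exists>k\<in>{1..K}. Q j k = Val s) \<and>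
     (\<forall>j1\<in>{1..F}. \<forall>k1\<in>{1..K}. \<forall>j2\<in>{1..F}. \<forall>k2\<in>{1..K}. \<forall>s.
        (j1, k1) \<noteq> (j2, k2) \<and> Q j1 k1 = Val s \<and> Q j2 k2 = Val s \<longrightarrow>
        j1 \<noteq> j2 \<and> k1 \<noteq> k2 \<and> Q j1 k2 = Star \<and> Q j2 k1 = Star)"

text \<open>HPDA. P0 j k1 = True means the entry p^(0)_{j,k1} is a star, False means null.
  P k1 j k2 is the entry p^(k1)_{j,k2}; Ss k1 is the set S_{k1}; Sm is S_m.\<close>
definition is_HPDA ::
  "nat \<Rightarrow> nat \<Rightarrow> nat \<Rightarrow> nat \<Rightarrow> nat \<Rightarrow> int set \<Rightarrow> (nat \<Rightarrow> int set) \<Rightarrow>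
   (nat \<Rightarrow> nat \<Rightarrow> bool) \<Rightarrow> (nat \<Rightarrow> nat \<Rightarrow> nat \<Rightarrow> cell) \<Rightarrow> bool" where
  "is_HPDA K1 K2 F Z1 Z2 Sm Ss P0 P \<longleftrightarrow>
     K1 > 0 \<and> K2 > 0 \<and> F > 0 \<and> Z1 > 0 \<and> Z2 > 0 \<and> Z1 < F \<and> Z2 < F \<and>
     (\<forall>k1\<in>{1..K1}. card {j\<in>{1..F}. P0 j k1} = Z1) \<and>
     (\<forall>k1\<in>{1..K1}. is_PDA_over K2 F Z2 (Ss k1) (P k1)) \<and>
     (\<forall>s\<in>Sm. (\<exists>!k1. k1 \<in> {1..K1} \<and> (\<exists>j\<in>{1..F}. \<exists>k2\<in>{1..K2}. P k1 j k2 = Val s)) \<and>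
        (\<forall>k1\<in>{1..K1}. \<forall>j\<in>{1..F}. \<forall>k2\<in>{1..K2}. P k1 j k2 = Val s \<longrightarrow> P0 j k1)) \<and>
     (\<forall>k1\<in>{1..K1}. \<forall>k1'\<in>{1..K1}. \<forall>j\<in>{1..F}. \<forall>j'\<in>{1..F}.
        \<forall>k2\<in>{1..K2}. \<forall>k2'\<in>{1..K2}. \<forall>s.
        k1 \<noteq> k1' \<and> P k1 j k2 = Val s \<and> P k1' j' k2' = Val s \<longrightarrow>
          ((\<exists>t. P k1 j' k2 = Val t) \<longrightarrow> P0 j' k1) \<and>
          ((\<exists>t. P k1' j k2' = Val t) \<longrightarrow> P0 j k1'))"

text \<open>Files: W n j is packet j (in [F]) of file n (in [N]), a bit string of length L = B/F.
  A demand vector: d k1 k2 \<in> [N] is the file requested by user U_{k1,k2}.\<close>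
type_synonym files = "nat \<Rightarrow> nat \<Rightarrow> bool list"
type_synonym demand = "nat \<Rightarrow> nat \<Rightarrow> nat"

definition valid_files :: "nat \<Rightarrow> nat \<Rightarrow> nat \<Rightarrow> files \<Rightarrow> bool" where
  "valid_files N F L W \<longleftrightarrow> (\<forall>n\<in>{1..N}. \<forall>j\<in>{1..F}. length (W n j) = L)"

definition valid_demand :: "nat \<Rightarrow> nat \<Rightarrow> nat \<Rightarrow> demand \<Rightarrow> bool" where
  "valid_demand K1 K2 N d \<longleftrightarrow> (\<forall>k1\<in>{1..K1}. \<forall>k2\<in>{1..K2}. d k1 k2 \<in> {1..N})"

definition depends_only_on :: "(nat \<times> nat) set \<Rightarrow> (files \<Rightarrow> 'b) \<Rightarrow> bool" where
  "depends_only_on C g \<longleftrightarrow>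
     (\<forall>W W'. (\<forall>(n, j)\<in>C. W n j = W' n j) \<longrightarrow> g W = g W')"

text \<open>
  hier_scheme K1 K2 M1 M2 N F L R1 R2 ZM ZU X S Y T Dec:
  ZM k1 = set of packets (n,j) cached by mirror k1; ZU k1 k2 = packets cached by U_{k1,k2};
  X d W = server broadcast (list of S d packet-sized symbols);
  Y k1 d Xs W = broadcast of mirror k1 (T k1 d symbols), a function of Xs, its cache and d;
  Dec k1 k2 d Ys W j = user U_{k1,k2}'s estimate of packet j of its requested file,
  a function of Ys, its cache and d.\<close>
definition hier_scheme ::
  "nat \<Rightarrow> nat \<Rightarrow> real \<Rightarrow> real \<Rightarrow> nat \<Rightarrow> nat \<Rightarrow> nat \<Rightarrow> real \<Rightarrow> real \<Rightarrow>
   (nat \<Rightarrow> (nat \<times> nat) set) \<Rightarrow> (nat \<Rightarrow> nat \<Rightarrow> (nat \<times> nat) set) \<Rightarrow>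
   (demand \<Rightarrow> files \<Rightarrow> bool list list) \<Rightarrow> (demand \<Rightarrow> nat) \<Rightarrow>
   (nat \<Rightarrow> demand \<Rightarrow> bool list list \<Rightarrow> files \<Rightarrow> bool list list) \<Rightarrow> (nat \<Rightarrow> demand \<Rightarrow> nat) \<Rightarrow>
   (nat \<Rightarrow> nat \<Rightarrow> demand \<Rightarrow> bool list list \<Rightarrow> files \<Rightarrow> nat \<Rightarrow> bool list) \<Rightarrow> bool" where
  "hier_scheme K1 K2 M1 M2 N F L R1 R2 ZM ZU X S Y T Dec \<longleftrightarrow>
     \<comment> \<open>placement and memory constraints (each packet has B/F bits, B = F L)\<close>
     (\<forall>k1\<in>{1..K1}. ZM k1 \<subseteq> {1..N} \<times> {1..F} \<and> real (card (ZM k1)) * real L \<le> M1 * real (F * L)) \<and>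
     (\<forall>k1\<in>{1..K1}. \<forall>k2\<in>{1..K2}.
        ZU k1 k2 \<subseteq> {1..N} \<times> {1..F} \<and> real (card (ZU k1 k2)) * real L \<le> M2 * real (F * L)) \<and>
     \<comment> \<open>message formats\<close>
     (\<forall>d W. valid_demand K1 K2 N d \<and> valid_files N F L W \<longrightarrow>
        length (X d W) = S d \<and> (\<forall>x\<in>set (X d W). length x = L) \<and>
        (\<forall>k1\<in>{1..K1}. length (Y k1 d (X d W) W) = T k1 d \<and>
           (\<forall>y\<in>set (Y k1 d (X d W) W). length y = L))) \<and>
     \<comment> \<open>mirror messages depend on files only through the mirror cache\<close>
     (\<forall>k1\<in>{1..K1}. \<forall>d Xs. valid_demand K1 K2 N d \<longrightarrow> depends_only_on (ZM k1) (Y k1 d Xs)) \<and>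
     \<comment> \<open>decoders depend on files only through the user cache\<close>
     (\<forall>k1\<in>{1..K1}. \<forall>k2\<in>{1..K2}. \<forall>d Ys. valid_demand K1 K2 N d \<longrightarrow>
        depends_only_on (ZU k1 k2) (Dec k1 k2 d Ys)) \<and>
     \<comment> \<open>correct decoding\<close>
     (\<forall>d W. valid_demand K1 K2 N d \<and> valid_files N F L W \<longrightarrow>
        (\<forall>k1\<in>{1..K1}. \<forall>k2\<in>{1..K2}. \<forall>j\<in>{1..F}.
           Dec k1 k2 d (Y k1 d (X d W) W) W j = W (d k1 k2) j)) \<and>
     \<comment> \<open>loads: R1 = max_d S(d)/F, R2 = max_{k1,d} T(k1,d)/F\<close>
     (\<forall>d. valid_demand K1 K2 N d \<longrightarrow> real (S d) / real F \<le> R1) \<and>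
     (\<exists>d. valid_demand K1 K2 N d \<and> real (S d) / real F = R1) \<and>
     (\<forall>k1\<in>{1..K1}. \<forall>d. valid_demand K1 K2 N d \<longrightarrow> real (T k1 d) / real F \<le> R2) \<and>
     (\<exists>k1\<in>{1..K1}. \<exists>d. valid_demand K1 K2 N d \<and> real (T k1 d) / real F = R2)"

end

theory Submission
  imports Defs
begin

text \<open>Each integer s of the HPDA labels one coded symbol: the XOR of the packets requested at
  the entries labelled s. The server broadcasts the symbols outside S_m. For each s in S_k1,
  mirror k1 forwards the symbol with all terms from other subarrays that it caches removed;
  symbols in S_m it computes from its own cache alone, by (B3). A user sitting at an entry
  labelled s caches every other remaining term: terms of its own subarray by (C3), terms of
  other subarrays because the mirror removed them unless (B4) puts them in the user's cache.\<close>

definition xor_bits :: "nat \<Rightarrow> bool list \<Rightarrow> bool list \<Rightarrow> bool list" where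
  "xor_bits L a b = map (\<lambda>i. a ! i \<noteq> b ! i) [0..<L]"

definition xor_sum :: "nat \<Rightarrow> 'a set \<Rightarrow> ('a \<Rightarrow> bool list) \<Rightarrow> bool list" where
  "xor_sum L A f = map (\<lambda>i. odd (card {a \<in> A. f a ! i})) [0..<L]"

lemma length_xor_bits [simp]: "length (xor_bits L a b) = L"
  by (simp add: xor_bits_def)

lemma length_xor_sum [simp]: "length (xor_sum L A f) = L"
  by (simp add: xor_sum_def)

lemma xor_sum_cong: "(\<And>a. a \<in> A \<Longrightarrow> f a = g a) \<Longrightarrow> xor_sum L A f = xor_sum L A g"
  unfolding xor_sum_def by (metis (mono_tags, lifting) Collect_cong mem_Collect_eq)

lemma odd_card_Diff:
  assumes "finite B" "C \<subseteq> B"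
  shows "odd (card (B - C)) \<longleftrightarrow> odd (card B) \<noteq> odd (card C)"
proof -
  have "card B = card C + card (B - C)"
    using assms card_Diff_subset[of C B] card_mono[of B C] finite_subset[of C B] by auto
  then show ?thesis by auto
qed

lemma xor_bits_xor_sum_Diff:
  assumes "finite B" "C \<subseteq> B"
  shows "xor_bits L (xor_sum L B f) (xor_sum L C f) = xor_sum L (B - C) f"
proof -
  have "odd (card {a \<in> B - C. f a ! i}) \<longleftrightarrow>
      odd (card {a \<in> B. f a ! i}) \<noteq> odd (card {a \<in> C. f a ! i})" for i
  proof -
    have "{a \<in> B - C. f a ! i} = {a \<in> B. f a ! i} - {a \<in> C. f a ! i}" by auto
    moreover have "{a \<in> C. f a ! i} \<subseteq> {a \<in> B. f a ! i}" using assms(2) by auto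
    ultimately show ?thesis using assms(1) by (simp add: odd_card_Diff)
  qed
  then show ?thesis by (auto simp: xor_bits_def xor_sum_def)
qed

lemma xor_sum_singleton:
  assumes "length (f a) = L"
  shows "xor_sum L {a} f = f a"
proof -
  have "{x \<in> {a}. f x ! i} = (if f a ! i then {a} else {})" for i by auto
  then have "odd (card {x \<in> {a}. f x ! i}) \<longleftrightarrow> f a ! i" for i by simp
  then show ?thesis using assms map_nth[of "f a"] by (simp add: xor_sum_def)
qed

text \<open>A message is a list of symbols aligned with a list of labels; a receiver reads the symbol
  with label x by looking it up.\<close>
definition lookup_symbol :: "'a list \<Rightarrow> 'b list \<Rightarrow> 'a \<Rightarrow> 'b" where
  "lookup_symbol xs ys x = the (map_of (zip xs ys) x)"

lemma lookup_symbol_map: "x \<in> set xs \<Longrightarrow> lookup_symbol xs (map f xs) x = f x"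
  by (simp add: lookup_symbol_def map_of_zip_map)

lemma card_pairs_with_second:
  "card {(n, j). n \<in> {1..N} \<and> j \<in> {1..F} \<and> Q j} = N * card {j \<in> {1..F}. Q j}"
proof -
  have "{(n, j). n \<in> {1..N} \<and> j \<in> {1..F} \<and> Q j} = {1..N} \<times> {j \<in> {1..F}. Q j}" by auto
  then show ?thesis by (simp add: card_cartesian_product)
qed

lemma PDA_entry:
  "is_PDA_over K F Z S Q \<Longrightarrow> j \<in> {1..F} \<Longrightarrow> k \<in> {1..K} \<Longrightarrow>
    Q j k = Star \<or> (\<exists>s\<in>S. Q j k = Val s)"
  unfolding is_PDA_over_def by blast

lemma PDA_card_Star:
  "is_PDA_over K F Z S Q \<Longrightarrow> k \<in> {1..K} \<Longrightarrow> card {j \<in> {1..F}. Q j k = Star} = Z"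
  unfolding is_PDA_over_def by blast

lemma PDA_symbol_occurs:
  "is_PDA_over K F Z S Q \<Longrightarrow> s \<in> S \<Longrightarrow> \<exists>j\<in>{1..F}. \<exists>k\<in>{1..K}. Q j k = Val s"
  unfolding is_PDA_over_def by blast

lemma PDA_same_symbol_Star:
  assumes "is_PDA_over K F Z S Q"
    and "j \<in> {1..F}" "k \<in> {1..K}" "j' \<in> {1..F}" "k' \<in> {1..K}" "(j, k) \<noteq> (j', k')"
    and "Q j k = Val s" "Q j' k' = Val s"
  shows "Q j' k = Star"
  using assms unfolding is_PDA_over_def by metis

definition requested :: "demand \<Rightarrow> files \<Rightarrow> nat \<times> nat \<times> nat \<Rightarrow> bool list" where
  "requested d W = (\<lambda>(k1, j, k2). W (d k1 k2) j)"

locale hpda =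
  fixes K1 K2 F Z1 Z2 :: nat and Sm :: "int set" and Ss :: "nat \<Rightarrow> int set"
    and P0 :: "nat \<Rightarrow> nat \<Rightarrow> bool" and P :: "nat \<Rightarrow> nat \<Rightarrow> nat \<Rightarrow> cell"
  assumes is_HPDA: "is_HPDA K1 K2 F Z1 Z2 Sm Ss P0 P"
begin

lemma dimensions_pos: "0 < K1" "0 < K2" "0 < F"
  using is_HPDA unfolding is_HPDA_def by auto

lemma card_mirror_Star: "k1 \<in> {1..K1} \<Longrightarrow> card {j \<in> {1..F}. P0 j k1} = Z1"
  using is_HPDA unfolding is_HPDA_def by blast

lemma subarray_PDA: "k1 \<in> {1..K1} \<Longrightarrow> is_PDA_over K2 F Z2 (Ss k1) (P k1)"
  using is_HPDA unfolding is_HPDA_def by blast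

lemma finite_Ss: "k1 \<in> {1..K1} \<Longrightarrow> finite (Ss k1)"
  using subarray_PDA unfolding is_PDA_over_def by blast

lemma mirror_symbol_clause:
  "\<forall>s\<in>Sm. (\<exists>!k1. k1 \<in> {1..K1} \<and> (\<exists>j\<in>{1..F}. \<exists>k2\<in>{1..K2}. P k1 j k2 = Val s)) \<and>
     (\<forall>k1\<in>{1..K1}. \<forall>j\<in>{1..F}. \<forall>k2\<in>{1..K2}. P k1 j k2 = Val s \<longrightarrow> P0 j k1)"
  using is_HPDA unfolding is_HPDA_def by (elim conjE)

lemma mirror_symbol_unique:
  assumes "s \<in> Sm" and "k1 \<in> {1..K1}" "j \<in> {1..F}" "k2 \<in> {1..K2}" "P k1 j k2 = Val s"
    and "k1' \<in> {1..K1}" "j' \<in> {1..F}" "k2' \<in> {1..K2}" "P k1' j' k2' = Val s"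
  shows "k1' = k1"
  using mirror_symbol_clause assms by blast

lemma mirror_symbol_cached:
  "s \<in> Sm \<Longrightarrow> k1 \<in> {1..K1} \<Longrightarrow> j \<in> {1..F} \<Longrightarrow> k2 \<in> {1..K2} \<Longrightarrow> P k1 j k2 = Val s \<Longrightarrow> P0 j k1"
  using mirror_symbol_clause by blast

lemma mirror_symbol_occurs: "s \<in> Sm \<Longrightarrow> \<exists>k1\<in>{1..K1}. \<exists>j\<in>{1..F}. \<exists>k2\<in>{1..K2}. P k1 j k2 = Val s"
  using mirror_symbol_clause by blast

lemma cross_symbol_cached:
  assumes "k1 \<in> {1..K1}" "k1' \<in> {1..K1}" "k1 \<noteq> k1'"
    and "j \<in> {1..F}" "j' \<in> {1..F}" "k2 \<in> {1..K2}" "k2' \<in> {1..K2}"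
    and "P k1 j k2 = Val s" "P k1' j' k2' = Val s" "P k1 j' k2 = Val t"
  shows "P0 j' k1"
proof -
  have "\<forall>k1\<in>{1..K1}. \<forall>k1'\<in>{1..K1}. \<forall>j\<in>{1..F}. \<forall>j'\<in>{1..F}.
      \<forall>k2\<in>{1..K2}. \<forall>k2'\<in>{1..K2}. \<forall>s.
      k1 \<noteq> k1' \<and> P k1 j k2 = Val s \<and> P k1' j' k2' = Val s \<longrightarrow>
        ((\<exists>t. P k1 j' k2 = Val t) \<longrightarrow> P0 j' k1) \<and> ((\<exists>t. P k1' j k2' = Val t) \<longrightarrow> P0 j k1')"
    using is_HPDA unfolding is_HPDA_def by (elim conjE)
  from this[rule_format, OF assms(1,2,4,5,6,7)] show ?thesis using assms(3,8-) by blast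
qed

lemma Sm_subset_symbols: "Sm \<subseteq> (\<Union>k1\<in>{1..K1}. Ss k1)"
proof
  fix s assume "s \<in> Sm"
  then obtain k1 j k2 where "k1 \<in> {1..K1}" "j \<in> {1..F}" "k2 \<in> {1..K2}" "P k1 j k2 = Val s"
    using mirror_symbol_occurs by blast
  then show "s \<in> (\<Union>k1\<in>{1..K1}. Ss k1)" using PDA_entry[OF subarray_PDA] by fastforce
qed

definition occurrences :: "int \<Rightarrow> (nat \<times> nat \<times> nat) set" where
  "occurrences s = {(k1, j, k2). k1 \<in> {1..K1} \<and> j \<in> {1..F} \<and> k2 \<in> {1..K2} \<and> P k1 j k2 = Val s}"

lemma finite_occurrences: "finite (occurrences s)"
proof (rule finite_subset)
  show "occurrences s \<subseteq> {1..K1} \<times> {1..F} \<times> {1..K2}" unfolding occurrences_def by auto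
qed simp

text \<open>The entries labelled s that survive in the symbol forwarded by mirror k1: the mirror
  removes the terms of other subarrays whose packets it caches.\<close>
definition mirror_residual :: "nat \<Rightarrow> int \<Rightarrow> (nat \<times> nat \<times> nat) set" where
  "mirror_residual k1 s = {(k1', j, k2) \<in> occurrences s. k1' = k1 \<or> \<not> P0 j k1}"

lemma mirror_residual_Sm:
  assumes "k1 \<in> {1..K1}" "s \<in> Sm" "s \<in> Ss k1"
  shows "mirror_residual k1 s = {(k1', j, k2) \<in> occurrences s. k1' = k1 \<and> P0 j k1}"
proof -
  obtain j k2 where occ: "j \<in> {1..F}" "k2 \<in> {1..K2}" "P k1 j k2 = Val s"
    using PDA_symbol_occurs[OF subarray_PDA] assms by blast
  have "k1' = k1 \<and> P0 j' k1" if "(k1', j', k2') \<in> occurrences s" for k1' j' k2'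
  proof -
    have "k1' = k1"
      using that occ assms mirror_symbol_unique unfolding occurrences_def by blast
    with that show ?thesis using assms mirror_symbol_cached unfolding occurrences_def by blast
  qed
  then show ?thesis unfolding mirror_residual_def by auto
qed

lemma mirror_residual_cached_by_user:
  assumes "k1 \<in> {1..K1}" "j \<in> {1..F}" "k2 \<in> {1..K2}" "P k1 j k2 = Val s"
    and "(k1', j', k2') \<in> mirror_residual k1 s" "(k1', j', k2') \<noteq> (k1, j, k2)"
  shows "P k1 j' k2 = Star"
proof -
  have occ: "k1' \<in> {1..K1}" "j' \<in> {1..F}" "k2' \<in> {1..K2}" "P k1' j' k2' = Val s"
    using assms(5) unfolding mirror_residual_def occurrences_def by auto
  show ?thesis
  proof (cases "k1' = k1")
    case True
    with assms(6) have "(j, k2) \<noteq> (j', k2')" by auto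
    then show ?thesis
      using PDA_same_symbol_Star[OF subarray_PDA[OF assms(1)] assms(2,3) occ(2,3)]
        assms(4) occ(4) unfolding True by blast
  next
    case False
    then have "\<not> P0 j' k1" using assms(5) unfolding mirror_residual_def by auto
    moreover have "P0 j' k1" if "P k1 j' k2 = Val t" for t
      using cross_symbol_cached[OF assms(1) occ(1) _ assms(2) occ(2) assms(3) occ(3)
          assms(4) occ(4) that] False by blast
    ultimately show ?thesis
      using PDA_entry[OF subarray_PDA[OF assms(1)] occ(2) assms(3)] by auto
  qed
qed

end

locale hpda_scheme = hpda +
  fixes N L :: nat
begin

definition mirror_cache :: "nat \<Rightarrow> (nat \<times> nat) set" where
  "mirror_cache k1 = {(n, j). n \<in> {1..N} \<and> j \<in> {1..F} \<and> P0 j k1}"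

definition user_cache :: "nat \<Rightarrow> nat \<Rightarrow> (nat \<times> nat) set" where
  "user_cache k1 k2 = {(n, j). n \<in> {1..N} \<and> j \<in> {1..F} \<and> P k1 j k2 = Star}"

definition server_symbols :: "int list" where
  "server_symbols = sorted_list_of_set ((\<Union>k1\<in>{1..K1}. Ss k1) - Sm)"

definition mirror_symbols :: "nat \<Rightarrow> int list" where
  "mirror_symbols k1 = sorted_list_of_set (Ss k1)"

definition server_msg :: "demand \<Rightarrow> files \<Rightarrow> bool list list" where
  "server_msg d W = map (\<lambda>s. xor_sum L (occurrences s) (requested d W)) server_symbols"

definition mirror_msg :: "nat \<Rightarrow> demand \<Rightarrow> bool list list \<Rightarrow> files \<Rightarrow> bool list list" where
  "mirror_msg k1 d Xs W = map (\<lambda>s.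
     if s \<in> Sm then xor_sum L {(k1', j, k2) \<in> occurrences s. k1' = k1 \<and> P0 j k1} (requested d W)
     else xor_bits L (lookup_symbol server_symbols Xs s)
       (xor_sum L {(k1', j, k2) \<in> occurrences s. k1' \<noteq> k1 \<and> P0 j k1} (requested d W)))
   (mirror_symbols k1)"

text \<open>The filter on Star entries is vacuous for the mirror message actually received
  (by mirror_residual_cached_by_user), but it makes the decoder read only cached packets
  whatever message it is given.\<close>
definition user_decoder ::
  "nat \<Rightarrow> nat \<Rightarrow> demand \<Rightarrow> bool list list \<Rightarrow> files \<Rightarrow> nat \<Rightarrow> bool list" where
  "user_decoder k1 k2 d Ys W j =
     (if j \<in> {1..F} then
        (case P k1 j k2 of
          Star \<Rightarrow> W (d k1 k2) j
        | Val s \<Rightarrow> xor_bits L (lookup_symbol (mirror_symbols k1) Ys s)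
            (xor_sum L {(k1', j', k2') \<in> mirror_residual k1 s - {(k1, j, k2)}. P k1 j' k2 = Star}
              (requested d W)))
      else [])"

lemma card_mirror_cache: "k1 \<in> {1..K1} \<Longrightarrow> card (mirror_cache k1) = N * Z1"
  by (simp only: mirror_cache_def card_pairs_with_second card_mirror_Star)

lemma card_user_cache: "k1 \<in> {1..K1} \<Longrightarrow> k2 \<in> {1..K2} \<Longrightarrow> card (user_cache k1 k2) = N * Z2"
  by (simp only: user_cache_def card_pairs_with_second PDA_card_Star[OF subarray_PDA])

lemma lookup_mirror_msg:
  assumes "k1 \<in> {1..K1}" "s \<in> Ss k1"
  shows "lookup_symbol (mirror_symbols k1) (mirror_msg k1 d (server_msg d W) W) s =
    xor_sum L (mirror_residual k1 s) (requested d W)"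
proof (cases "s \<in> Sm")
  case True
  have "s \<in> set (mirror_symbols k1)"
    using assms finite_Ss unfolding mirror_symbols_def by simp
  then show ?thesis
    using True unfolding mirror_msg_def
    by (simp add: lookup_symbol_map mirror_residual_Sm[OF assms(1) True assms(2)])
next
  case False
  have "s \<in> set (mirror_symbols k1)"
    using assms finite_Ss unfolding mirror_symbols_def by simp
  moreover have "s \<in> set server_symbols"
    using assms False finite_Ss unfolding server_symbols_def by auto
  moreover have "xor_bits L (xor_sum L (occurrences s) (requested d W))
      (xor_sum L {(k1', j, k2) \<in> occurrences s. k1' \<noteq> k1 \<and> P0 j k1} (requested d W)) =
    xor_sum L (occurrences s - {(k1', j, k2) \<in> occurrences s. k1' \<noteq> k1 \<and> P0 j k1}) (requested d W)"
    by (rule xor_bits_xor_sum_Diff) (auto simp: finite_occurrences)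
  moreover have "occurrences s - {(k1', j, k2) \<in> occurrences s. k1' \<noteq> k1 \<and> P0 j k1} =
      mirror_residual k1 s"
    unfolding mirror_residual_def by auto
  ultimately show ?thesis
    using False unfolding mirror_msg_def server_msg_def by (simp add: lookup_symbol_map)
qed

lemma requested_packet_index:
  "valid_demand K1 K2 N d \<Longrightarrow> (k1', j, k2') \<in> occurrences s \<Longrightarrow> d k1' k2' \<in> {1..N} \<and> j \<in> {1..F}"
  unfolding valid_demand_def occurrences_def by auto

lemma mirror_msg_depends_only_on_cache:
  assumes "valid_demand K1 K2 N d"
  shows "depends_only_on (mirror_cache k1) (mirror_msg k1 d Xs)"
  unfolding depends_only_on_def
proof (intro allI impI)
  fix W W' :: files
  assume agree: "\<forall>(n, j)\<in>mirror_cache k1. W n j = W' n j"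
  have "requested d W (k1', j, k2') = requested d W' (k1', j, k2')"
    if "(k1', j, k2') \<in> occurrences s" "P0 j k1" for s k1' j k2'
    using that agree requested_packet_index[OF assms]
    unfolding mirror_cache_def requested_def by auto
  then have "xor_sum L {(k1', j, k2) \<in> occurrences s. R k1' \<and> P0 j k1} (requested d W) =
      xor_sum L {(k1', j, k2) \<in> occurrences s. R k1' \<and> P0 j k1} (requested d W')" for s R
    by (intro xor_sum_cong) auto
  then show "mirror_msg k1 d Xs W = mirror_msg k1 d Xs W'"
    unfolding mirror_msg_def by simp
qed

lemma user_decoder_depends_only_on_cache:
  assumes "valid_demand K1 K2 N d" "k1 \<in> {1..K1}" "k2 \<in> {1..K2}"
  shows "depends_only_on (user_cache k1 k2) (user_decoder k1 k2 d Ys)"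
  unfolding depends_only_on_def
proof (intro allI impI ext)
  fix W W' :: files and j
  assume agree: "\<forall>(n, j)\<in>user_cache k1 k2. W n j = W' n j"
  have "requested d W (k1', j', k2') = requested d W' (k1', j', k2')"
    if "(k1', j', k2') \<in> mirror_residual k1 s" "P k1 j' k2 = Star" for s k1' j' k2'
  proof -
    have "(d k1' k2', j') \<in> user_cache k1 k2"
      using that requested_packet_index[OF assms(1)]
      unfolding user_cache_def mirror_residual_def by auto
    then show ?thesis using agree unfolding requested_def by auto
  qed
  then have "xor_sum L {(k1', j', k2') \<in> mirror_residual k1 s - {(k1, j, k2)}. P k1 j' k2 = Star}
        (requested d W) =
      xor_sum L {(k1', j', k2') \<in> mirror_residual k1 s - {(k1, j, k2)}. P k1 j' k2 = Star}
        (requested d W')" for s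
    by (intro xor_sum_cong) auto
  moreover have "W (d k1 k2) j = W' (d k1 k2) j" if "j \<in> {1..F}" "P k1 j k2 = Star"
    using that assms agree unfolding user_cache_def valid_demand_def by auto
  ultimately show "user_decoder k1 k2 d Ys W j = user_decoder k1 k2 d Ys W' j"
    unfolding user_decoder_def by (auto split: cell.split)
qed

lemma user_decoder_correct:
  assumes "valid_demand K1 K2 N d" "valid_files N F L W"
    and "k1 \<in> {1..K1}" "k2 \<in> {1..K2}" "j \<in> {1..F}"
  shows "user_decoder k1 k2 d (mirror_msg k1 d (server_msg d W) W) W j = W (d k1 k2) j"
proof (cases "P k1 j k2")
  case Star
  then show ?thesis using assms(5) unfolding user_decoder_def by simp
next
  case (Val s)
  have s: "s \<in> Ss k1" using PDA_entry[OF subarray_PDA[OF assms(3)] assms(5,4)] Val by auto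
  have own: "(k1, j, k2) \<in> mirror_residual k1 s"
    using assms(3-5) Val unfolding mirror_residual_def occurrences_def by auto
  have "{(k1', j', k2') \<in> mirror_residual k1 s - {(k1, j, k2)}. P k1 j' k2 = Star} =
      mirror_residual k1 s - {(k1, j, k2)}"
    using mirror_residual_cached_by_user[OF assms(3,5,4) Val] by auto
  then have "user_decoder k1 k2 d (mirror_msg k1 d (server_msg d W) W) W j =
      xor_bits L (xor_sum L (mirror_residual k1 s) (requested d W))
        (xor_sum L (mirror_residual k1 s - {(k1, j, k2)}) (requested d W))"
    using assms(5) Val unfolding user_decoder_def by (simp add: lookup_mirror_msg[OF assms(3) s])
  also have "\<dots> = xor_sum L {(k1, j, k2)} (requested d W)"
    using own finite_subset[OF _ finite_occurrences, of "mirror_residual k1 s" s]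
    by (subst xor_bits_xor_sum_Diff) (auto simp: mirror_residual_def Diff_Diff_Int)
  also have "\<dots> = W (d k1 k2) j"
    using assms unfolding valid_demand_def valid_files_def
    by (subst xor_sum_singleton) (auto simp: requested_def)
  finally show ?thesis .
qed

lemma length_server_symbols:
  "real (length server_symbols) = real (card (\<Union>k1\<in>{1..K1}. Ss k1)) - real (card Sm)"
proof -
  have "finite (\<Union>k1\<in>{1..K1}. Ss k1)" using finite_Ss by blast
  then show ?thesis
    using Sm_subset_symbols unfolding server_symbols_def
    by (simp add: card_Diff_subset finite_subset card_mono of_nat_diff)
qed

lemma length_mirror_symbols: "length (mirror_symbols k1) = card (Ss k1)"
  by (simp add: mirror_symbols_def)

lemma hier_scheme_of_hpda:
  assumes "1 \<le> N"
  shows "hier_scheme K1 K2 (real N * real Z1 / real F) (real N * real Z2 / real F) N F L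
    ((real (card (\<Union>k1\<in>{1..K1}. Ss k1)) - real (card Sm)) / real F)
    (Max ((\<lambda>k1. real (card (Ss k1)) / real F) ` {1..K1}))
    mirror_cache user_cache server_msg (\<lambda>_. length server_symbols)
    mirror_msg (\<lambda>k1 _. length (mirror_symbols k1)) user_decoder"
proof -
  have memory: "real (card C) * real L \<le> real N * real Z / real F * real (F * L)"
    if "card C = N * Z" for C :: "(nat \<times> nat) set" and Z
    using that dimensions_pos(3) by simp
  have caches_subset: "mirror_cache k1 \<subseteq> {1..N} \<times> {1..F}" "user_cache k1 k2 \<subseteq> {1..N} \<times> {1..F}"
    for k1 k2
    unfolding mirror_cache_def user_cache_def by auto
  have placement:
    "\<forall>k1\<in>{1..K1}. mirror_cache k1 \<subseteq> {1..N} \<times> {1..F} \<and>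
       real (card (mirror_cache k1)) * real L \<le> real N * real Z1 / real F * real (F * L)"
    "\<forall>k1\<in>{1..K1}. \<forall>k2\<in>{1..K2}. user_cache k1 k2 \<subseteq> {1..N} \<times> {1..F} \<and>
       real (card (user_cache k1 k2)) * real L \<le> real N * real Z2 / real F * real (F * L)"
    using memory[OF card_mirror_cache] memory[OF card_user_cache] caches_subset by auto
  have formats: "\<forall>d W. valid_demand K1 K2 N d \<and> valid_files N F L W \<longrightarrow>
      length (server_msg d W) = length server_symbols \<and> (\<forall>x\<in>set (server_msg d W). length x = L) \<and>
      (\<forall>k1\<in>{1..K1}. length (mirror_msg k1 d (server_msg d W) W) = length (mirror_symbols k1) \<and>
         (\<forall>y\<in>set (mirror_msg k1 d (server_msg d W) W). length y = L))"
    unfolding server_msg_def mirror_msg_def by auto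
  have some_demand: "valid_demand K1 K2 N (\<lambda>_ _. 1)"
    using assms unfolding valid_demand_def by simp
  have "Max ((\<lambda>k1. real (card (Ss k1)) / real F) ` {1..K1}) \<in>
      (\<lambda>k1. real (card (Ss k1)) / real F) ` {1..K1}"
    using dimensions_pos(1) by (intro Max_in) auto
  then have mirror_load_attained: "\<exists>k1\<in>{1..K1}. \<exists>d. valid_demand K1 K2 N d \<and>
      real (length (mirror_symbols k1)) / real F = Max ((\<lambda>k1. real (card (Ss k1)) / real F) ` {1..K1})"
    using some_demand by (auto simp: length_mirror_symbols)
  show ?thesis
    unfolding hier_scheme_def length_server_symbols
    using placement formats some_demand mirror_load_attained
      mirror_msg_depends_only_on_cache user_decoder_depends_only_on_cache user_decoder_correct
    by (auto simp: length_mirror_symbols intro!: Max_ge)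
qed

end

theorem theorem1:
  fixes K1 K2 F Z1 Z2 :: nat
    and Sm :: "int set" and Ss :: "nat \<Rightarrow> int set"
    and P0 :: "nat \<Rightarrow> nat \<Rightarrow> bool" and P :: "nat \<Rightarrow> nat \<Rightarrow> nat \<Rightarrow> cell"
  assumes "is_HPDA K1 K2 F Z1 Z2 Sm Ss P0 P"
  shows "\<forall>N L. N \<ge> K1 * K2 \<longrightarrow>
    (\<exists>ZM ZU X S Y T Dec.
       hier_scheme K1 K2 (real N * real Z1 / real F) (real N * real Z2 / real F) N F L
         ((real (card (\<Union>k1\<in>{1..K1}. Ss k1)) - real (card Sm)) / real F)
         (Max ((\<lambda>k1. real (card (Ss k1)) / real F) ` {1..K1}))
         ZM ZU X S Y T Dec \<and>
       (\<forall>k1\<in>{1..K1}. ZM k1 = {(n, j). n \<in> {1..N} \<and> j \<in> {1..F} \<and> P0 j k1}) \<and>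
       (\<forall>k1\<in>{1..K1}. \<forall>k2\<in>{1..K2}.
          ZU k1 k2 = {(n, j). n \<in> {1..N} \<and> j \<in> {1..F} \<and> P k1 j k2 = Star}))"
proof (intro allI impI)
  fix N L :: nat
  assume "N \<ge> K1 * K2"
  interpret hpda_scheme K1 K2 F Z1 Z2 Sm Ss P0 P N L
    using assms by unfold_locales
  have "1 \<le> K1 * K2" using dimensions_pos(1,2) by simp
  with \<open>N \<ge> K1 * K2\<close> have "1 \<le> N" by linarith
  then show "\<exists>ZM ZU X S Y T Dec.
       hier_scheme K1 K2 (real N * real Z1 / real F) (real N * real Z2 / real F) N F L
         ((real (card (\<Union>k1\<in>{1..K1}. Ss k1)) - real (card Sm)) / real F)
         (Max ((\<lambda>k1. real (card (Ss k1)) / real F) ` {1..K1}))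
         ZM ZU X S Y T Dec \<and>
       (\<forall>k1\<in>{1..K1}. ZM k1 = {(n, j). n \<in> {1..N} \<and> j \<in> {1..F} \<and> P0 j k1}) \<and>
       (\<forall>k1\<in>{1..K1}. \<forall>k2\<in>{1..K2}.
          ZU k1 k2 = {(n, j). n \<in> {1..N} \<and> j \<in> {1..F} \<and> P k1 j k2 = Star})"
    using hier_scheme_of_hpda unfolding mirror_cache_def user_cache_def by blast
qed

end
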